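(* Let $L\subseteq \mathbb{K}^{2n}\oplus\mathbb{K}^{2m}$ be a nonempty affine Lagrangian relation $L:n\to m$. Then there exist $k\in\mathbb{N}$ with $k\le \min(n,m)$, an affine symplectomorphism $S$ of $(\mathbb{K}^{2n},\omega_n)$ and an affine symplectomorphism $T$ of $(\mathbb{K}^{2m},\omega_m)$ such that \[ L=\Gamma_T\circ\big(\mathrm{id}_{k}\oplus P_{m-k}\big)\circ\big(\mathrm{id}_{k}\oplus P_{n-k}^{\dagger}\big)\circ\Gamma_S, \] i.e. \[ L=\Big\{\big(v,\;T(u\oplus p)\big)\;\Big|\; v\in\mathbb{K}^{2n},\ u\in\mathbb{K}^{2k},\ p\in P_{m-k},\ \exists q\in P_{n-k}:\ S v=u\oplus q\Big\}. \] Moreover, if $L$ is a (nonempty) linear Lagrangian relation, $S$ and $T$ can be chosen to be linear symplectomorphisms.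
   Context: $\mathbb{K}$ is an arbitrary field. For $n\in\mathbb{N}$, $\mathbb{K}^{2n}=\bigoplus_{j=0}^{n-1}\mathbb{K}^2$ with coordinates $(z_j,x_j)$ carries the symplectic form $\omega_n\big(\bigoplus_j (z_j,x_j),\bigoplus_j(z'_j,x'_j)\big)=\sum_j (z_jx'_j-x_jz'_j)$. A relation $n\to m$ is a subset of $\mathbb{K}^{2n}\oplus\mathbb{K}^{2m}$, which is given the symplectic form $((v,w),(v',w'))\mapsto \omega_n(v,v')-\omega_m(w,w')$. For a linear subspace $S$ of a symplectic space $(V,\omega)$, $S^\omega=\{v: \omega(v,s)=0\ \forall s\in S\}$; $S$ is Lagrangian if $S=S^\omega$. An affine subspace (possibly empty) is Lagrangian if it is empty or its underlying linear subspace (direction) is Lagrangian; an affine (resp. linear) Lagrangian relation $n\to m$ is an affine (resp. linear) Lagrangian subspace of $\mathbb{K}^{2n}\oplus\mathbb{K}^{2m}$. Relations compose by relational composition $S\circ R=\{(a,c):\exists b,\ (a,b)\in R,(b,c)\in S\}$; $\oplus$ of relations is the direct sum (cartesian product, with coordinates concatenated), and $\mathrm{id}_k$ is the diagonal of $\mathbb{K}^{2k}$. An affine symplectomorphism is an affine bijection whose linear part preserves the symplectic form; $\Gamma_S=\{(v,Sv)\}$ denotes its graph. $P_r=\{\bigoplus_{j=0}^{r-1}(0,x_j): x_j\in\mathbb{K}\}\subseteq\mathbb{K}^{2r}$, viewed as a relation $0\to r$; for a relation $R:n\to m$, its dagger $R^\dagger:m\to n$ is $\{(\bigoplus_j(z_j,-x_j),\bigoplus_k(z'_k,-x'_k))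 : (\bigoplus_k(z'_k,x'_k),\bigoplus_j(z_j,x_j))\in R\}$, so $P_r^\dagger:r\to 0$. *)

theory Defs
  imports Main
begin

text \<open>A vector of K^{2n} = (K^2)^n is represented as a list of n pairs (z_j, x_j).
  Direct sum of vectors is list concatenation.\<close>

type_synonym 'a svec = "('a \<times> 'a) list"

definition vecs :: "nat \<Rightarrow> 'a svec set" where
  "vecs n = {v. length v = n}"

definition vzero :: "nat \<Rightarrow> ('a::zero) svec" where
  "vzero n = replicate n (0, 0)"

definition vadd :: "('a::plus) svec \<Rightarrow> 'a svec \<Rightarrow> 'a svec" where
  "vadd v w = map2 (\<lambda>(z, x) (z', x'). (z + z', x + x')) v w"

definition vscale :: "('a::times) \<Rightarrow> 'a svec \<Rightarrow> 'a svec" where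
  "vscale c v = map (\<lambda>(z, x). (c * z, c * x)) v"

definition omega :: "('a::comm_ring) svec \<Rightarrow> 'a svec \<Rightarrow> 'a" where
  "omega v w = sum_list (map2 (\<lambda>(z, x) (z', x'). z * x' - x * z') v w)"

text \<open>Relations n -> m are subsets of K^{2n} (+) K^{2m}, i.e. sets of pairs of vectors,
  with the symplectic form omega_n(v,v') - omega_m(w,w').\<close>

definition rel_omega :: "('a::comm_ring) svec \<times> 'a svec \<Rightarrow> 'a svec \<times> 'a svec \<Rightarrow> 'a" where
  "rel_omega p q = omega (fst p) (fst q) - omega (snd p) (snd q)"

definition padd :: "('a::plus) svec \<times> 'a svec \<Rightarrow> 'a svec \<times> 'a svec \<Rightarrow> 'a svec \<times> 'a svec" where
  "padd p q = (vadd (fst p) (fst q), vadd (snd p) (snd q))"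

definition pscale :: "('a::times) \<Rightarrow> 'a svec \<times> 'a svec \<Rightarrow> 'a svec \<times> 'a svec" where
  "pscale c p = (vscale c (fst p), vscale c (snd p))"

definition rel_lin_subspace :: "nat \<Rightarrow> nat \<Rightarrow> (('a::field) svec \<times> 'a svec) set \<Rightarrow> bool" where
  "rel_lin_subspace n m D \<longleftrightarrow>
     D \<subseteq> vecs n \<times> vecs m \<and> (vzero n, vzero m) \<in> D \<and>
     (\<forall>p\<in>D. \<forall>q\<in>D. padd p q \<in> D) \<and> (\<forall>c. \<forall>p\<in>D. pscale c p \<in> D)"

definition rel_omega_compl :: "nat \<Rightarrow> nat \<Rightarrow> (('a::field) svec \<times> 'a svec) set \<Rightarrow> ('a svec \<times> 'a svec) set" where
  "rel_omega_compl n m D = {p \<in> vecs n \<times> vecs m. \<forall>s\<in>D. rel_omega p s = 0}"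

definition lin_lagrangian_rel :: "nat \<Rightarrow> nat \<Rightarrow> (('a::field) svec \<times> 'a svec) set \<Rightarrow> bool" where
  "lin_lagrangian_rel n m L \<longleftrightarrow> rel_lin_subspace n m L \<and> L = rel_omega_compl n m L"

definition affine_lagrangian_rel :: "nat \<Rightarrow> nat \<Rightarrow> (('a::field) svec \<times> 'a svec) set \<Rightarrow> bool" where
  "affine_lagrangian_rel n m L \<longleftrightarrow>
     L = {} \<or> (\<exists>a D. a \<in> vecs n \<times> vecs m \<and> lin_lagrangian_rel n m D \<and> L = padd a ` D)"

definition lin_map :: "nat \<Rightarrow> (('a::field) svec \<Rightarrow> 'a svec) \<Rightarrow> bool" where
  "lin_map n A \<longleftrightarrow> (\<forall>v\<in>vecs n. A v \<in> vecs n) \<and>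
     (\<forall>v\<in>vecs n. \<forall>w\<in>vecs n. A (vadd v w) = vadd (A v) (A w)) \<and>
     (\<forall>c. \<forall>v\<in>vecs n. A (vscale c v) = vscale c (A v))"

definition preserves_omega :: "nat \<Rightarrow> (('a::field) svec \<Rightarrow> 'a svec) \<Rightarrow> bool" where
  "preserves_omega n A \<longleftrightarrow> (\<forall>v\<in>vecs n. \<forall>w\<in>vecs n. omega (A v) (A w) = omega v w)"

definition affine_symp :: "nat \<Rightarrow> (('a::field) svec \<Rightarrow> 'a svec) \<Rightarrow> bool" where
  "affine_symp n S \<longleftrightarrow> bij_betw S (vecs n) (vecs n) \<and>
     (\<exists>A b. b \<in> vecs n \<and> lin_map n A \<and> preserves_omega n A \<and>
            (\<forall>v\<in>vecs n. S v = vadd (A v) b))"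

definition lin_symp :: "nat \<Rightarrow> (('a::field) svec \<Rightarrow> 'a svec) \<Rightarrow> bool" where
  "lin_symp n S \<longleftrightarrow> bij_betw S (vecs n) (vecs n) \<and> lin_map n S \<and> preserves_omega n S"

definition graph :: "nat \<Rightarrow> ('a svec \<Rightarrow> 'a svec) \<Rightarrow> ('a svec \<times> 'a svec) set" where
  "graph n S = {(v, S v) | v. v \<in> vecs n}"

definition idrel :: "nat \<Rightarrow> ('a svec \<times> 'a svec) set" where
  "idrel k = {(v, v) | v. v \<in> vecs k}"

definition rsum :: "('a svec \<times> 'a svec) set \<Rightarrow> ('a svec \<times> 'a svec) set \<Rightarrow> ('a svec \<times> 'a svec) set" where
  "rsum R R' = {(a @ a', b @ b') | a b a' b'. (a, b) \<in> R \<and> (a', b') \<in> R'}"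

definition Prel :: "nat \<Rightarrow> (('a::zero) svec \<times> 'a svec) set" where
  "Prel r = {([], map (\<lambda>x. (0, x)) xs) | xs. length xs = r}"

definition negx :: "('a::uminus) svec \<Rightarrow> 'a svec" where
  "negx v = map (\<lambda>(z, x). (z, - x)) v"

definition dagger :: "(('a::uminus) svec \<times> 'a svec) set \<Rightarrow> ('a svec \<times> 'a svec) set" where
  "dagger R = {(negx b, negx a) | a b. (a, b) \<in> R}"

text \<open>Relational composition in diagrammatic order is the library's O:
  R O S = S \<circ> R in the paper's notation.\<close>

end

theory Submission
  imports Defs
begin

text \<open>
  Induction on n + m, for linear L first. If L contains (v, 0) with v \<noteq> 0, a linear
  symplectomorphism (a product of two transvections) moves v to the last x-direction; then L
  splits off the factor P\<dagger>_1 = P_1 \<times> {0}, and the complementary factor is again Lagrangian.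
  Pairs (0, w) are handled by transposing L. Otherwise L is the graph of a linear bijection, so
  it contains (a, b) and (c, d) with omega a c = omega b d = 1; moving both symplectic pairs to
  the first coordinate splits off id_1. The result is S \<times> T mapping L onto
  id_k \<oplus> (P_{n-k} \<times> P_{m-k}) = (id_k \<oplus> P\<dagger>_{n-k}) \<circ> (id_k \<oplus> P_{m-k}).
  An affine Lagrangian relation is a translate of its direction, and translating the graph
  form only adds constants to S and T.
\<close>

lemma vecs_iff [simp]: "v \<in> vecs n \<longleftrightarrow> length v = n"
  by (simp add: vecs_def)

lemma length_vadd [simp]: "length (vadd v w) = min (length v) (length w)"
  by (simp add: vadd_def)

lemma length_vscale [simp]: "length (vscale c v) = length v"
  by (simp add: vscale_def)

lemma length_vzero [simp]: "length (vzero n) = n"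
  by (simp add: vzero_def)

lemma vadd_Nil [simp]: "vadd [] w = []" "vadd v [] = []"
  by (auto simp: vadd_def)

lemma vadd_Cons [simp]: "vadd ((z, x) # v) ((z', x') # w) = (z + z', x + x') # vadd v w"
  by (simp add: vadd_def)

lemma vscale_Nil [simp]: "vscale c [] = []"
  by (simp add: vscale_def)

lemma vscale_Cons [simp]: "vscale c ((z, x) # v) = (c * z, c * x) # vscale c v"
  by (simp add: vscale_def)

lemma vzero_0 [simp]: "vzero 0 = []"
  by (simp add: vzero_def)

lemma vzero_Suc: "vzero (Suc n) = (0, 0) # vzero n"
  by (simp add: vzero_def)

lemma vzero_add: "vzero (n1 + n2) = vzero n1 @ vzero n2"
  by (simp add: vzero_def replicate_add)

lemma length_add_split:
  assumes "length v = n1 + n2"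
  obtains v1 v2 where "v = v1 @ v2" "length v1 = n1" "length v2 = n2"
  using assms by (intro that [of "take n1 v" "drop n1 v"]) simp_all

lemma vadd_append: "length v = length w \<Longrightarrow> vadd (v @ v') (w @ w') = vadd v w @ vadd v' w'"
  by (simp add: vadd_def)

lemma vscale_append: "vscale c (v @ w) = vscale c v @ vscale c w"
  by (simp add: vscale_def)

lemma nth_vadd: "i < length v \<Longrightarrow> i < length w \<Longrightarrow>
    vadd v w ! i = (fst (v ! i) + fst (w ! i), snd (v ! i) + snd (w ! i))"
  by (simp add: vadd_def case_prod_beta)

lemma nth_vscale: "i < length v \<Longrightarrow> vscale c v ! i = (c * fst (v ! i), c * snd (v ! i))"
  by (simp add: vscale_def case_prod_beta)

lemma nth_vzero: "i < n \<Longrightarrow> vzero n ! i = (0, 0)"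
  by (simp add: vzero_def)

lemma vadd_commute: "vadd v w = vadd w (v :: ('a::ab_semigroup_add) svec)"
  by (rule nth_equalityI) (auto simp: nth_vadd add.commute)

lemma vadd_assoc: "vadd (vadd u v) w = vadd u (vadd v (w :: ('a::semigroup_add) svec))"
  by (rule nth_equalityI) (auto simp: nth_vadd add.assoc)

lemma vadd_vzero [simp]: "length v = n \<Longrightarrow> vadd v (vzero n) = (v :: ('a::monoid_add) svec)"
  by (rule nth_equalityI) (auto simp: nth_vadd nth_vzero)

lemma vzero_vadd [simp]: "length v = n \<Longrightarrow> vadd (vzero n) v = (v :: ('a::monoid_add) svec)"
  by (rule nth_equalityI) (auto simp: nth_vadd nth_vzero)

lemma vscale_vzero [simp]: "vscale c (vzero n) = (vzero n :: ('a::mult_zero) svec)"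
  by (rule nth_equalityI) (auto simp: nth_vscale nth_vzero)

lemma vscale_zero [simp]: "vscale 0 v = vzero (length (v :: ('a::mult_zero) svec))"
  by (rule nth_equalityI) (auto simp: nth_vscale nth_vzero)

lemma vscale_add: "vscale (a + b) v = vadd (vscale a v) (vscale b (v :: ('a::semiring) svec))"
  by (rule nth_equalityI) (auto simp: nth_vadd nth_vscale distrib_right)

definition vsub :: "('a::ring_1) svec \<Rightarrow> 'a svec \<Rightarrow> 'a svec" where
  "vsub v w = vadd v (vscale (-1) w)"

lemma length_vsub [simp]: "length (vsub v w) = min (length v) (length w)"
  by (simp add: vsub_def)

lemma vsub_self [simp]: "vsub v v = vzero (length v)"
  by (rule nth_equalityI) (auto simp: vsub_def nth_vadd nth_vscale nth_vzero)

lemma vsub_vzero [simp]: "length v = n \<Longrightarrow> vsub v (vzero n) = (v :: ('a::ring_1) svec)"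
  by (simp add: vsub_def)

lemma vadd_vsub_cancel [simp]: "length v = length w \<Longrightarrow> vadd (vsub v w) w = v"
  by (rule nth_equalityI) (auto simp: vsub_def nth_vadd nth_vscale)

lemma vsub_vadd_cancel [simp]: "length v = length w \<Longrightarrow> vsub (vadd v w) w = v"
  by (rule nth_equalityI) (auto simp: vsub_def nth_vadd nth_vscale)

lemma vsub_eq_vzero_iff: "length v = length w \<Longrightarrow> vsub v w = vzero (length v) \<longleftrightarrow> v = w"
  by (metis vadd_vsub_cancel vsub_self vzero_vadd)

lemma vsub_append: "length v = length w \<Longrightarrow> vsub (v @ v') (w @ w') = vsub v w @ vsub v' w'"
  by (simp add: vsub_def vscale_append vadd_append)

lemma omega_Nil [simp]: "omega [] w = 0" "omega v [] = 0"
  by (auto simp: omega_def)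

lemma omega_Cons [simp]: "omega ((z, x) # v) ((z', x') # w) = z * x' - x * z' + omega v w"
  by (simp add: omega_def)

lemma omega_append: "length v = length w \<Longrightarrow> omega (v @ v') (w @ w') = omega v w + omega v' w'"
  by (simp add: omega_def)

lemma omega_vadd_left: "length u = length w \<Longrightarrow> length v = length w \<Longrightarrow>
    omega (vadd u v) w = omega u w + omega v (w :: ('a::comm_ring) svec)"
proof (induction u arbitrary: v w)
  case (Cons p u)
  then show ?case by (cases p; cases v; cases w) (auto simp: algebra_simps)
qed simp

lemma omega_vadd_right: "length u = length w \<Longrightarrow> length v = length w \<Longrightarrow>
    omega w (vadd u v) = omega w u + omega w (v :: ('a::comm_ring) svec)"
proof (induction u arbitrary: v w)
  case (Cons p u)
  then show ?case by (cases p; cases v; cases w) (auto simp: algebra_simps)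
qed simp

lemma omega_vscale_left: "omega (vscale c v) w = c * omega v (w :: ('a::comm_ring) svec)"
proof (induction v arbitrary: w)
  case (Cons p v)
  then show ?case by (cases p; cases w) (auto simp: algebra_simps)
qed simp

lemma omega_vscale_right: "omega w (vscale c v) = c * omega w (v :: ('a::comm_ring) svec)"
proof (induction v arbitrary: w)
  case (Cons p v)
  then show ?case by (cases p; cases w) (auto simp: algebra_simps)
qed simp

lemma omega_vsub_left: "length u = length w \<Longrightarrow> length v = length w \<Longrightarrow>
    omega (vsub u v) w = omega u w - omega v (w :: ('a::comm_ring_1) svec)"
  by (simp add: vsub_def omega_vadd_left omega_vscale_left)

lemma omega_antisym: "omega v w = - omega w (v :: ('a::comm_ring) svec)"
proof (induction v arbitrary: w)
  case (Cons p v)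
  then show ?case by (cases p; cases w) (auto simp: algebra_simps)
qed simp

lemma omega_self [simp]: "omega v (v :: ('a::comm_ring) svec) = 0"
  by (induction v) (auto simp: mult.commute)

lemma omega_vzero_left [simp]: "omega (vzero n) (v :: ('a::comm_ring) svec) = 0"
proof (induction n arbitrary: v)
  case (Suc n)
  then show ?case by (cases v) (auto simp: vzero_Suc)
qed simp

lemma omega_vzero_right [simp]: "omega v (vzero n) = (0 :: 'a::comm_ring)"
  using omega_antisym [of v "vzero n"] by simp

lemma omega_nondegenerate:
  assumes "length v = n" "v \<noteq> vzero n"
  obtains u where "length u = n" "omega v u \<noteq> (0 :: 'a::field)"
  using assms
proof (induction v arbitrary: n thesis)
  case (Cons p v)
  obtain z x where p: "p = (z, x)" by (cases p)
  obtain n' where n: "n = Suc n'" "length v = n'" using Cons.prems(2) by auto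
  consider "z \<noteq> 0" | "x \<noteq> 0" | "z = 0" "x = 0" "v \<noteq> vzero n'"
    using Cons.prems(3) n p by (auto simp: vzero_Suc)
  then show ?case
  proof cases
    case 1
    then show ?thesis using Cons.prems(1)[of "(0, 1) # vzero n'"] n p by simp
  next
    case 2
    then show ?thesis using Cons.prems(1)[of "(1, 0) # vzero n'"] n p by simp
  next
    case 3
    then obtain u where "length u = n'" "omega v u \<noteq> 0" using Cons.IH n by blast
    then show ?thesis using Cons.prems(1)[of "(0, 0) # u"] n p 3 by simp
  qed
qed simp

lemma lin_symp_intro:
  assumes "lin_map n S" "preserves_omega n S" "\<And>v. v \<in> vecs n \<Longrightarrow> S' v \<in> vecs n"
    "\<And>v. v \<in> vecs n \<Longrightarrow> S' (S v) = v" "\<And>v. v \<in> vecs n \<Longrightarrow> S (S' v) = v"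
  shows "lin_symp n S"
  using assms unfolding lin_symp_def
  by (intro conjI bij_betw_byWitness[where f' = S']) (auto simp: lin_map_def)

lemma lin_symp_vecs: "lin_symp n S \<Longrightarrow> length v = n \<Longrightarrow> length (S v) = n"
  by (simp add: lin_symp_def lin_map_def)

lemma lin_symp_vadd: "lin_symp n S \<Longrightarrow> length v = n \<Longrightarrow> length w = n \<Longrightarrow>
    S (vadd v w) = vadd (S v) (S w)"
  by (simp add: lin_symp_def lin_map_def)

lemma lin_symp_vscale: "lin_symp n S \<Longrightarrow> length v = n \<Longrightarrow> S (vscale c v) = vscale c (S v)"
  by (simp add: lin_symp_def lin_map_def)

lemma lin_symp_omega: "lin_symp n S \<Longrightarrow> length v = n \<Longrightarrow> length w = n \<Longrightarrow>
    omega (S v) (S w) = omega v w"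
  by (simp add: lin_symp_def preserves_omega_def)

lemma lin_symp_inj: "lin_symp n S \<Longrightarrow> length v = n \<Longrightarrow> length w = n \<Longrightarrow> S v = S w \<Longrightarrow> v = w"
  by (auto simp: lin_symp_def bij_betw_def inj_on_def)

lemma lin_symp_vzero:
  fixes S :: "('a::field) svec \<Rightarrow> 'a svec"
  assumes "lin_symp n S"
  shows "S (vzero n) = vzero n"
proof -
  have "S (vzero n) = S (vscale 0 (vzero n))" by simp
  also have "\<dots> = vscale 0 (S (vzero n))" using assms lin_symp_vscale by (metis length_vzero)
  also have "\<dots> = vzero n"
    using lin_symp_vecs [OF assms, of "vzero n"]
    by (intro nth_equalityI) (auto simp: nth_vscale nth_vzero)
  finally show ?thesis .
qed

lemma lin_symp_vsub: "lin_symp n S \<Longrightarrow> length v = n \<Longrightarrow> length w = n \<Longrightarrow>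
    S (vsub v w) = vsub (S v) (S w)"
  by (simp add: vsub_def lin_symp_vadd lin_symp_vscale)

lemma lin_symp_id: "lin_symp n id"
  by (rule lin_symp_intro [where S' = id]) (auto simp: lin_map_def preserves_omega_def)

lemma lin_symp_comp: "lin_symp n S \<Longrightarrow> lin_symp n T \<Longrightarrow> lin_symp n (T \<circ> S)"
  unfolding lin_symp_def
  by (auto simp: bij_betw_trans lin_map_def preserves_omega_def)

lemma lin_symp_inverse:
  fixes S :: "('a::field) svec \<Rightarrow> 'a svec"
  assumes S: "lin_symp n S"
  obtains S' where "lin_symp n S'" "\<And>v. length v = n \<Longrightarrow> S' (S v) = v"
    "\<And>v. length v = n \<Longrightarrow> S (S' v) = v"
proof
  let ?S' = "inv_into (vecs n) S"
  have bij: "bij_betw S (vecs n) (vecs n)" using S by (simp add: lin_symp_def)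
  show left: "?S' (S v) = v" if "length v = n" for v
    using bij that by (simp add: bij_betw_inv_into_left)
  show right: "S (?S' v) = v" if "length v = n" for v
    using bij that by (simp add: bij_betw_inv_into_right)
  have len: "length (?S' v) = n" if "length v = n" for v
    using bij that by (metis bij_betw_def inv_into_into vecs_iff)
  have "lin_map n ?S'"
    unfolding lin_map_def
  proof (intro conjI ballI allI)
    fix v w :: "'a svec" assume "v \<in> vecs n" "w \<in> vecs n"
    then show "?S' (vadd v w) = vadd (?S' v) (?S' w)"
      using left [of "vadd (?S' v) (?S' w)"] by (simp add: len right lin_symp_vadd [OF S])
  next
    fix c and v :: "'a svec" assume "v \<in> vecs n"
    then show "?S' (vscale c v) = vscale c (?S' v)"
      using left [of "vscale c (?S' v)"] by (simp add: len right lin_symp_vscale [OF S])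
  qed (simp add: len)
  moreover have "preserves_omega n ?S'"
    unfolding preserves_omega_def using lin_symp_omega [OF S] by (metis len right vecs_iff)
  ultimately show "lin_symp n ?S'"
    using S by (intro lin_symp_intro [where S' = S]) (auto simp: len left right lin_symp_vecs)
qed

definition transvection :: "('a::field) svec \<Rightarrow> 'a \<Rightarrow> 'a svec \<Rightarrow> 'a svec" where
  "transvection w c v = vadd v (vscale (c * omega w v) w)"

lemma transvection_inverse:
  assumes "length w = n" "length v = n"
  shows "transvection w (- c) (transvection w c v) = v"
proof -
  have "omega w (transvection w c v) = omega w v"
    using assms by (simp add: transvection_def omega_vadd_right omega_vscale_right)
  then show ?thesis
    using assms by (simp add: transvection_def vadd_assoc vscale_add [symmetric])
qed

lemma lin_symp_transvection:
  fixes w :: "('a::field) svec"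
  assumes w: "length w = n"
  shows "lin_symp n (transvection w c)"
proof (rule lin_symp_intro [where S' = "transvection w (- c)"])
  show "lin_map n (transvection w c)"
    unfolding lin_map_def
  proof (intro conjI ballI allI)
    fix u v :: "'a svec" assume "u \<in> vecs n" "v \<in> vecs n"
    then show "transvection w c (vadd u v) = vadd (transvection w c u) (transvection w c v)"
      using w by (intro nth_equalityI)
        (auto simp: transvection_def omega_vadd_right nth_vadd nth_vscale algebra_simps)
  next
    fix a and v :: "'a svec" assume "v \<in> vecs n"
    then show "transvection w c (vscale a v) = vscale a (transvection w c v)"
      using w by (intro nth_equalityI)
        (auto simp: transvection_def omega_vscale_right nth_vadd nth_vscale algebra_simps)
  qed (use w in \<open>simp add: transvection_def\<close>)
  show "preserves_omega n (transvection w c)"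
    unfolding preserves_omega_def
  proof (intro ballI)
    fix u v :: "'a svec" assume "u \<in> vecs n" "v \<in> vecs n"
    then have "omega (transvection w c u) (transvection w c v) =
        omega u v + c * omega w v * (omega u w + omega w u)"
      using w by (simp add: transvection_def omega_vadd_right omega_vadd_left
          omega_vscale_right omega_vscale_left algebra_simps)
    then show "omega (transvection w c u) (transvection w c v) = omega u v"
      using omega_antisym [of u w] by simp
  qed
qed (use w transvection_inverse [of w n _ c] transvection_inverse [of w n _ "- c"] in
    \<open>auto simp: transvection_def\<close>)

lemma transvection_moves:
  fixes s t :: "('a::field) svec"
  assumes "length s = n" "length t = n" "omega t s \<noteq> 0"
  obtains S where "lin_symp n S" "S s = t"
    "\<And>v. length v = n \<Longrightarrow> omega (vsub s t) v = 0 \<Longrightarrow> S v = v"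
proof
  let ?S = "transvection (vsub s t) (1 / omega t s)"
  show "lin_symp n ?S" using assms by (simp add: lin_symp_transvection)
  have "1 / omega t s * omega (vsub s t) s = -1"
    using assms by (simp add: omega_vsub_left)
  then show "?S s = t"
    using assms by (simp add: transvection_def vsub_def)
      (rule nth_equalityI, auto simp: nth_vadd nth_vscale)
  show "?S v = v" if "length v = n" "omega (vsub s t) v = 0" for v
    using that assms by (simp add: transvection_def)
qed

lemma exists_common_non_orthogonal:
  fixes s t :: "('a::field) svec"
  assumes "length s = n" "length t = n" "s \<noteq> vzero n" "t \<noteq> vzero n"
  obtains u where "length u = n" "omega s u \<noteq> 0" "omega t u \<noteq> 0"
proof -
  obtain u1 where u1: "length u1 = n" "omega s u1 \<noteq> 0"
    using omega_nondegenerate assms(1,3) by blast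
  obtain u2 where u2: "length u2 = n" "omega t u2 \<noteq> 0"
    using omega_nondegenerate assms(2,4) by blast
  consider "omega t u1 \<noteq> 0" | "omega s u2 \<noteq> 0" | "omega t u1 = 0" "omega s u2 = 0"
    by blast
  then show ?thesis
  proof cases
    case 3
    then have "omega s (vadd u1 u2) \<noteq> 0" "omega t (vadd u1 u2) \<noteq> 0"
      using u1 u2 assms by (simp_all add: omega_vadd_right)
    then show ?thesis using u1 u2 by (intro that [of "vadd u1 u2"]) simp_all
  qed (use that u1 u2 in blast)+
qed

lemma lin_symp_transitive:
  fixes s t :: "('a::field) svec"
  assumes "length s = n" "length t = n" "s \<noteq> vzero n" "t \<noteq> vzero n"
  obtains S where "lin_symp n S" "S s = t"
proof -
  obtain u where u: "length u = n" "omega s u \<noteq> 0" "omega t u \<noteq> 0"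
    using exists_common_non_orthogonal assms by blast
  have "omega u s \<noteq> 0" using u omega_antisym [of u s] by simp
  then obtain S1 where S1: "lin_symp n S1" "S1 s = u"
    using transvection_moves assms(1) u(1) by blast
  obtain S2 where S2: "lin_symp n S2" "S2 u = t"
    using transvection_moves u(1) assms(2) u(3) by blast
  show ?thesis using S1 S2 by (intro that [of "S2 \<circ> S1"]) (simp_all add: lin_symp_comp)
qed

definition e1 :: "nat \<Rightarrow> ('a::field) svec" where
  "e1 n = (1, 0) # vzero n"

definition f1 :: "nat \<Rightarrow> ('a::field) svec" where
  "f1 n = (0, 1) # vzero n"

lemma length_e1_f1 [simp]: "length (e1 n) = Suc n" "length (f1 n) = Suc n"
  by (simp_all add: e1_def f1_def)

lemma omega_e1_f1 [simp]: "omega (e1 n) (f1 n) = 1" "omega (f1 n) (e1 n) = -1"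
  by (simp_all add: e1_def f1_def)

lemma transvection_moves_fixing:
  fixes e c c' :: "('a::field) svec"
  assumes "length e = n" "length c = n" "length c' = n"
    and "omega e c = 1" "omega e c' = 1" "omega c' c \<noteq> 0"
  obtains S where "lin_symp n S" "S c = c'" "S e = e"
proof -
  obtain S where S: "lin_symp n S" "S c = c'"
    "\<And>v. length v = n \<Longrightarrow> omega (vsub c c') v = 0 \<Longrightarrow> S v = v"
    using transvection_moves assms(2,3,6) by blast
  have "omega (vsub c c') e = 0"
    using assms omega_antisym [of c e] omega_antisym [of c' e] by (simp add: omega_vsub_left)
  then show ?thesis using that S assms(1) by blast
qed

text \<open>If omega (f1 n) c1 vanishes, no transvection fixing e1 n moves c1 to f1 n directly;
  the detour goes through e1 n + f1 n.\<close>

lemma lin_symp_transitive_pairs: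
  fixes a c :: "('a::field) svec"
  assumes a: "length a = Suc n" and c: "length c = Suc n" and ac: "omega a c = 1"
  obtains S where "lin_symp (Suc n) S" "S a = e1 n" "S c = f1 n"
proof -
  have "a \<noteq> vzero (Suc n)"
  proof
    assume "a = vzero (Suc n)"
    with ac show False by simp
  qed
  moreover have "e1 n \<noteq> vzero (Suc n)" by (simp add: e1_def vzero_Suc)
  ultimately obtain S1 where S1: "lin_symp (Suc n) S1" "S1 a = e1 n"
    using lin_symp_transitive [OF a] by (metis length_e1_f1(1))
  define c1 where "c1 = S1 c"
  have c1: "length c1 = Suc n" "omega (e1 n) c1 = 1"
    using lin_symp_omega [OF S1(1) a c] S1(2) ac lin_symp_vecs [OF S1(1) c]
    by (simp_all add: c1_def)
  obtain S2 where S2: "lin_symp (Suc n) S2" "S2 c1 = f1 n" "S2 (e1 n) = e1 n"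
  proof (cases "omega (f1 n) c1 = 0")
    case False
    then show ?thesis
      using that transvection_moves_fixing [OF length_e1_f1(1) c1(1) length_e1_f1(2) c1(2)]
      by (metis omega_e1_f1(1))
  next
    case True
    define g :: "'a svec" where "g = vadd (e1 n) (f1 n)"
    have g: "length g = Suc n" "omega (e1 n) g = 1" "omega g c1 = 1" "omega (f1 n) g = -1"
      using c1 True by (simp_all add: g_def omega_vadd_left omega_vadd_right)
    obtain S where S: "lin_symp (Suc n) S" "S c1 = g" "S (e1 n) = e1 n"
      using transvection_moves_fixing [OF length_e1_f1(1) c1(1) g(1) c1(2) g(2)] g(3) by auto
    obtain S' where S': "lin_symp (Suc n) S'" "S' g = f1 n" "S' (e1 n) = e1 n"
      using transvection_moves_fixing [OF length_e1_f1(1) g(1) length_e1_f1(2) g(2)] g(4)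
      by auto
    show ?thesis using S S' by (intro that [of "S' \<circ> S"]) (simp_all add: lin_symp_comp)
  qed
  show ?thesis using S1 S2 by (intro that [of "S2 \<circ> S1"]) (simp_all add: lin_symp_comp c1_def)
qed

definition sum_map :: "nat \<Rightarrow> ('a svec \<Rightarrow> 'a svec) \<Rightarrow> ('a svec \<Rightarrow> 'a svec) \<Rightarrow> 'a svec \<Rightarrow> 'a svec"
  where "sum_map k S S' v = S (take k v) @ S' (drop k v)"

lemma sum_map_append [simp]: "length v = k \<Longrightarrow> sum_map k S S' (v @ w) = S v @ S' w"
  by (simp add: sum_map_def)

lemma lin_map_sum_map:
  fixes S1 S2 :: "('a::field) svec \<Rightarrow> 'a svec"
  assumes S1: "lin_symp n1 S1" and S2: "lin_symp n2 S2"
  shows "lin_map (n1 + n2) (sum_map n1 S1 S2)"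
  unfolding lin_map_def
proof (intro conjI ballI allI)
  fix v :: "'a svec" assume "v \<in> vecs (n1 + n2)"
  then obtain v1 v2 where "v = v1 @ v2" "length v1 = n1" "length v2 = n2"
    by (auto elim: length_add_split)
  then show "sum_map n1 S1 S2 v \<in> vecs (n1 + n2)"
    using S1 S2 by (simp add: lin_symp_vecs)
next
  fix v w :: "'a svec" assume "v \<in> vecs (n1 + n2)" "w \<in> vecs (n1 + n2)"
  then obtain v1 v2 w1 w2 where "v = v1 @ v2" "length v1 = n1" "length v2 = n2"
    "w = w1 @ w2" "length w1 = n1" "length w2 = n2"
    by (auto elim!: length_add_split)
  then show "sum_map n1 S1 S2 (vadd v w) = vadd (sum_map n1 S1 S2 v) (sum_map n1 S1 S2 w)"
    using S1 S2 by (simp add: vadd_append lin_symp_vecs lin_symp_vadd)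
next
  fix c and v :: "'a svec" assume "v \<in> vecs (n1 + n2)"
  then obtain v1 v2 where "v = v1 @ v2" "length v1 = n1" "length v2 = n2"
    by (auto elim: length_add_split)
  then show "sum_map n1 S1 S2 (vscale c v) = vscale c (sum_map n1 S1 S2 v)"
    using S1 S2 by (simp add: vscale_append lin_symp_vscale)
qed

lemma preserves_omega_sum_map:
  fixes S1 S2 :: "('a::field) svec \<Rightarrow> 'a svec"
  assumes S1: "lin_symp n1 S1" and S2: "lin_symp n2 S2"
  shows "preserves_omega (n1 + n2) (sum_map n1 S1 S2)"
  unfolding preserves_omega_def
proof (intro ballI)
  fix v w :: "'a svec" assume "v \<in> vecs (n1 + n2)" "w \<in> vecs (n1 + n2)"
  then obtain v1 v2 w1 w2 where "v = v1 @ v2" "length v1 = n1" "length v2 = n2"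
    "w = w1 @ w2" "length w1 = n1" "length w2 = n2"
    by (auto elim!: length_add_split)
  then show "omega (sum_map n1 S1 S2 v) (sum_map n1 S1 S2 w) = omega v w"
    using S1 S2 by (simp add: omega_append lin_symp_vecs lin_symp_omega)
qed

lemma lin_symp_sum_map:
  fixes S1 S2 :: "('a::field) svec \<Rightarrow> 'a svec"
  assumes S1: "lin_symp n1 S1" and S2: "lin_symp n2 S2"
  shows "lin_symp (n1 + n2) (sum_map n1 S1 S2)"
proof -
  obtain S1' where S1': "lin_symp n1 S1'" "\<And>v. length v = n1 \<Longrightarrow> S1' (S1 v) = v"
    "\<And>v. length v = n1 \<Longrightarrow> S1 (S1' v) = v"
    using lin_symp_inverse [OF S1] by blast
  obtain S2' where S2': "lin_symp n2 S2'" "\<And>v. length v = n2 \<Longrightarrow> S2' (S2 v) = v"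
    "\<And>v. length v = n2 \<Longrightarrow> S2 (S2' v) = v"
    using lin_symp_inverse [OF S2] by blast
  show ?thesis
  proof (rule lin_symp_intro [OF lin_map_sum_map [OF S1 S2] preserves_omega_sum_map [OF S1 S2]])
    fix v :: "'a svec" assume "v \<in> vecs (n1 + n2)"
    then obtain v1 v2 where v: "v = v1 @ v2" "length v1 = n1" "length v2 = n2"
      by (auto elim: length_add_split)
    then show "sum_map n1 S1' S2' v \<in> vecs (n1 + n2)"
      using S1' S2' by (simp add: lin_symp_vecs)
    show "sum_map n1 S1' S2' (sum_map n1 S1 S2 v) = v"
      using v S1 S2 S1' S2' by (simp add: lin_symp_vecs)
    show "sum_map n1 S1 S2 (sum_map n1 S1' S2' v) = v"
      using v S1' S2' by (simp add: lin_symp_vecs)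
  qed
qed

lemma lin_lagrangian_relI:
  assumes len: "\<And>a b. (a, b) \<in> L \<Longrightarrow> length a = n \<and> length b = m"
    and zero: "(vzero n, vzero m) \<in> L"
    and add: "\<And>a b c d. (a, b) \<in> L \<Longrightarrow> (c, d) \<in> L \<Longrightarrow> (vadd a c, vadd b d) \<in> L"
    and scale: "\<And>t a b. (a, b) \<in> L \<Longrightarrow> (vscale t a, vscale t b) \<in> L"
    and iso: "\<And>a b c d. (a, b) \<in> L \<Longrightarrow> (c, d) \<in> L \<Longrightarrow> omega a c = omega b d"
    and coiso: "\<And>a b. length a = n \<Longrightarrow> length b = m \<Longrightarrow>
      (\<And>c d. (c, d) \<in> L \<Longrightarrow> omega a c = omega b d) \<Longrightarrow> (a, b) \<in> L"
  shows "lin_lagrangian_rel n m L"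
  unfolding lin_lagrangian_rel_def
proof
  show "rel_lin_subspace n m L"
    unfolding rel_lin_subspace_def padd_def pscale_def
    using len zero add scale by auto
  show "L = rel_omega_compl n m L"
  proof
    show "L \<subseteq> rel_omega_compl n m L"
      unfolding rel_omega_compl_def rel_omega_def using len iso by fastforce
    show "rel_omega_compl n m L \<subseteq> L"
    proof
      fix p assume "p \<in> rel_omega_compl n m L"
      then show "p \<in> L"
        unfolding rel_omega_compl_def rel_omega_def using coiso by (cases p) fastforce
    qed
  qed
qed

context
  fixes n m :: nat and L :: "(('a::field) svec \<times> 'a svec) set"
  assumes L: "lin_lagrangian_rel n m L"
begin

lemma lagrangian_length:
  assumes "(a, b) \<in> L"
  shows "length a = n" "length b = m"
  using L assms by (auto simp: lin_lagrangian_rel_def rel_lin_subspace_def)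

lemma lagrangian_subset: "L \<subseteq> vecs n \<times> vecs m"
  using L by (simp add: lin_lagrangian_rel_def rel_lin_subspace_def)

lemma lagrangian_vzero: "(vzero n, vzero m) \<in> L"
  using L by (simp add: lin_lagrangian_rel_def rel_lin_subspace_def)

lemma lagrangian_vadd: "(a, b) \<in> L \<Longrightarrow> (c, d) \<in> L \<Longrightarrow> (vadd a c, vadd b d) \<in> L"
  using L unfolding lin_lagrangian_rel_def rel_lin_subspace_def
  by (metis fst_conv padd_def snd_conv)

lemma lagrangian_vscale: "(a, b) \<in> L \<Longrightarrow> (vscale t a, vscale t b) \<in> L"
  using L unfolding lin_lagrangian_rel_def rel_lin_subspace_def
  by (metis fst_conv pscale_def snd_conv)

lemma lagrangian_vsub: "(a, b) \<in> L \<Longrightarrow> (c, d) \<in> L \<Longrightarrow> (vsub a c, vsub b d) \<in> L"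
  unfolding vsub_def by (intro lagrangian_vadd lagrangian_vscale)

lemma lagrangian_isotropic:
  assumes "(a, b) \<in> L" "(c, d) \<in> L"
  shows "omega a c = omega b d"
proof -
  have "(a, b) \<in> rel_omega_compl n m L" using assms(1) L by (simp add: lin_lagrangian_rel_def)
  then have "rel_omega (a, b) (c, d) = 0" using assms(2) by (simp add: rel_omega_compl_def)
  then show ?thesis by (simp add: rel_omega_def)
qed

lemma lagrangian_coisotropic:
  assumes "length a = n" "length b = m" "\<And>c d. (c, d) \<in> L \<Longrightarrow> omega a c = omega b d"
  shows "(a, b) \<in> L"
proof -
  have "(a, b) \<in> rel_omega_compl n m L"
    using assms by (auto simp: rel_omega_compl_def rel_omega_def)
  then show ?thesis using L by (simp add: lin_lagrangian_rel_def)
qed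

end

lemma map_prod_imageI: "(a, b) \<in> L \<Longrightarrow> (S a, T b) \<in> map_prod S T ` L"
  by force

lemma map_prod_imageE:
  assumes "(a, b) \<in> map_prod S T ` L"
  obtains a' b' where "(a', b') \<in> L" "a = S a'" "b = T b'"
  using assms by auto

lemma lin_lagrangian_rel_image:
  fixes L :: "(('a::field) svec \<times> 'a svec) set"
  assumes L: "lin_lagrangian_rel n m L" and S: "lin_symp n S" and T: "lin_symp m T"
  shows "lin_lagrangian_rel n m (map_prod S T ` L)"
proof (rule lin_lagrangian_relI)
  show "(vzero n, vzero m) \<in> map_prod S T ` L"
    using map_prod_imageI [OF lagrangian_vzero [OF L], of S T]
    by (simp add: lin_symp_vzero S T)
  show "length a = n \<and> length b = m" if "(a, b) \<in> map_prod S T ` L" for a b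
    using that by (elim map_prod_imageE) (use lagrangian_length [OF L] lin_symp_vecs S T in blast)
  show "(vadd a c, vadd b d) \<in> map_prod S T ` L"
    if mem: "(a, b) \<in> map_prod S T ` L" "(c, d) \<in> map_prod S T ` L" for a b c d
  proof -
    obtain a' b' where ab: "(a', b') \<in> L" "a = S a'" "b = T b'"
      using mem(1) by (rule map_prod_imageE)
    obtain c' d' where cd: "(c', d') \<in> L" "c = S c'" "d = T d'"
      using mem(2) by (rule map_prod_imageE)
    have "vadd a c = S (vadd a' c')" "vadd b d = T (vadd b' d')"
      using ab cd lagrangian_length [OF L ab(1)] lagrangian_length [OF L cd(1)]
      by (simp_all add: lin_symp_vadd [OF S] lin_symp_vadd [OF T])
    then show ?thesis
      using map_prod_imageI [OF lagrangian_vadd [OF L ab(1) cd(1)]] by simp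
  qed
  show "(vscale t a, vscale t b) \<in> map_prod S T ` L" if mem: "(a, b) \<in> map_prod S T ` L" for t a b
  proof -
    obtain a' b' where ab: "(a', b') \<in> L" "a = S a'" "b = T b'"
      using mem by (rule map_prod_imageE)
    have "vscale t a = S (vscale t a')" "vscale t b = T (vscale t b')"
      using ab lagrangian_length [OF L ab(1)]
      by (simp_all add: lin_symp_vscale [OF S] lin_symp_vscale [OF T])
    then show ?thesis
      using map_prod_imageI [OF lagrangian_vscale [OF L ab(1)]] by simp
  qed
  show "omega a c = omega b d"
    if mem: "(a, b) \<in> map_prod S T ` L" "(c, d) \<in> map_prod S T ` L" for a b c d
  proof -
    obtain a' b' where ab: "(a', b') \<in> L" "a = S a'" "b = T b'"
      using mem(1) by (rule map_prod_imageE)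
    obtain c' d' where cd: "(c', d') \<in> L" "c = S c'" "d = T d'"
      using mem(2) by (rule map_prod_imageE)
    show ?thesis
      using ab cd lagrangian_length [OF L ab(1)] lagrangian_length [OF L cd(1)]
        lagrangian_isotropic [OF L ab(1) cd(1)]
      by (simp add: lin_symp_omega [OF S] lin_symp_omega [OF T])
  qed
next
  fix a b assume ab: "length a = n" "length b = m"
    and orth: "\<And>c d. (c, d) \<in> map_prod S T ` L \<Longrightarrow> omega a c = omega b d"
  obtain S' where S': "lin_symp n S'" "\<And>v. length v = n \<Longrightarrow> S (S' v) = v"
    using lin_symp_inverse [OF S] by blast
  obtain T' where T': "lin_symp m T'" "\<And>v. length v = m \<Longrightarrow> T (T' v) = v"
    using lin_symp_inverse [OF T] by blast
  have "(S' a, T' b) \<in> L"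
  proof (rule lagrangian_coisotropic [OF L])
    fix c d assume cd: "(c, d) \<in> L"
    have "omega (S' a) c = omega (S (S' a)) (S c)"
      using lin_symp_omega [OF S] lin_symp_vecs [OF S'(1)] ab lagrangian_length [OF L cd] by simp
    also have "\<dots> = omega b (T d)"
      using orth [OF map_prod_imageI [OF cd]] ab S'(2) by simp
    also have "\<dots> = omega (T (T' b)) (T d)" using ab T'(2) by simp
    also have "\<dots> = omega (T' b) d"
      using lin_symp_omega [OF T] lin_symp_vecs [OF T'(1)] ab lagrangian_length [OF L cd] by simp
    finally show "omega (S' a) c = omega (T' b) d" .
  qed (use ab S'(1) T'(1) lin_symp_vecs in auto)
  then show "(a, b) \<in> map_prod S T ` L"
    using map_prod_imageI [of "S' a" "T' b" L S T] ab S'(2) T'(2) by simp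
qed

lemma lin_lagrangian_rel_converse:
  fixes L :: "(('a::field) svec \<times> 'a svec) set"
  assumes L: "lin_lagrangian_rel n m L"
  shows "lin_lagrangian_rel m n (L\<inverse>)"
proof (rule lin_lagrangian_relI)
  show "omega a c = omega b d" if "(a, b) \<in> L\<inverse>" "(c, d) \<in> L\<inverse>" for a b c d
    using lagrangian_isotropic [OF L] that by simp
  show "(a, b) \<in> L\<inverse>"
    if "length a = m" "length b = n" "\<And>c d. (c, d) \<in> L\<inverse> \<Longrightarrow> omega a c = omega b d" for a b
    using that by (simp add: lagrangian_coisotropic [OF L])
qed (simp_all add: lagrangian_length [OF L] lagrangian_vzero [OF L] lagrangian_vadd [OF L]
  lagrangian_vscale [OF L])

lemma lin_lagrangian_rel_zero_dims:
  fixes L :: "(('a::field) svec \<times> 'a svec) set"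
  assumes L: "lin_lagrangian_rel n m L" and sub: "L \<subseteq> {(vzero n, vzero m)}"
  shows "n = 0 \<and> m = 0"
proof -
  have "(replicate n (1, 0), replicate m (1, 0)) \<in> L"
    using sub by (intro lagrangian_coisotropic [OF L]) auto
  then have "replicate n (1::'a, 0::'a) = replicate n (0, 0)"
    "replicate m (1::'a, 0::'a) = replicate m (0, 0)"
    using sub by (auto simp: vzero_def)
  then show ?thesis by (metis one_neq_zero prod.inject replicate_eq_replicate)
qed

lemma lin_lagrangian_rel_idrel: "lin_lagrangian_rel k k (idrel k :: (('a::field) svec \<times> _) set)"
proof (rule lin_lagrangian_relI)
  fix a b :: "'a svec"
  assume ab: "length a = k" "length b = k"
    and orth: "\<And>c d. (c, d) \<in> idrel k \<Longrightarrow> omega a c = omega b d"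
  have "omega (vsub a b) c = 0" if "length c = k" for c
    using orth [of c c] that ab by (simp add: idrel_def omega_vsub_left)
  then have "vsub a b = vzero k"
    using omega_nondegenerate [of "vsub a b" k] ab by fastforce
  then show "(a, b) \<in> idrel k"
    using ab vsub_eq_vzero_iff [of a b] by (simp add: idrel_def)
qed (auto simp: idrel_def)

definition Pvecs :: "nat \<Rightarrow> ('a::zero) svec set" where
  "Pvecs r = {q. length q = r \<and> (\<forall>t\<in>set q. fst t = 0)}"

lemma Pvecs_0 [simp]: "Pvecs 0 = {[]}"
  by (auto simp: Pvecs_def)

lemma Pvecs_append:
  "length q = r \<Longrightarrow> q @ q' \<in> Pvecs (r + s) \<longleftrightarrow> q \<in> Pvecs r \<and> q' \<in> Pvecs s"
  by (auto simp: Pvecs_def)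

lemma omega_Pvecs: "q \<in> Pvecs r \<Longrightarrow> q' \<in> Pvecs r \<Longrightarrow> omega q q' = (0 :: 'a::comm_ring)"
proof (induction q arbitrary: q' r)
  case (Cons t q)
  then obtain t' q'' r' where "q' = t' # q''" "r = Suc r'"
    by (cases q') (auto simp: Pvecs_def)
  with Cons show ?case by (cases t; cases t') (auto simp: Pvecs_def)
qed simp

lemma omega_orthogonal_Pvecs:
  fixes a :: "('a::field) svec"
  shows "length a = r \<Longrightarrow> (\<And>q. q \<in> Pvecs r \<Longrightarrow> omega a q = 0) \<Longrightarrow> a \<in> Pvecs r"
proof (induction a arbitrary: r)
  case (Cons t a)
  obtain z x where t: "t = (z, x)" by (cases t)
  obtain r' where r: "r = Suc r'" "length a = r'" using Cons.prems(1) by auto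
  have "(0, 1) # vzero r' \<in> Pvecs r" using r by (simp add: Pvecs_def vzero_def)
  then have "z = 0" using Cons.prems(2) t r by fastforce
  moreover have "a \<in> Pvecs r'"
  proof (rule Cons.IH [OF r(2)])
    fix q :: "'a svec" assume "q \<in> Pvecs r'"
    then have "(0, 0) # q \<in> Pvecs r" using r by (simp add: Pvecs_def)
    then show "omega a q = 0" using Cons.prems(2) t by fastforce
  qed
  ultimately show ?case using t r by (simp add: Pvecs_def)
qed (simp add: Pvecs_def)

lemma lin_lagrangian_rel_Pvecs:
  "lin_lagrangian_rel r 0 (Pvecs r \<times> {[]} :: (('a::field) svec \<times> _) set)"
proof (rule lin_lagrangian_relI)
  show "(vadd a c, vadd b d) \<in> Pvecs r \<times> {[]}"
    if "(a, b) \<in> Pvecs r \<times> {[]}" "(c, d) \<in> Pvecs r \<times> {[]}" for a b c d :: "'a svec"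
    using that by (auto simp: Pvecs_def all_set_conv_all_nth nth_vadd)
  show "(vscale t a, vscale t b) \<in> Pvecs r \<times> {[]}"
    if "(a, b) \<in> Pvecs r \<times> {[]}" for t and a b :: "'a svec"
    using that by (auto simp: Pvecs_def all_set_conv_all_nth nth_vscale)
  show "(a, b) \<in> Pvecs r \<times> {[]}"
    if "length a = r" "length b = 0"
      "\<And>c d. (c, d) \<in> Pvecs r \<times> {[]} \<Longrightarrow> omega a c = omega b d" for a b :: "'a svec"
    using that omega_orthogonal_Pvecs [of a r] by auto
qed (auto simp: Pvecs_def vzero_def omega_Pvecs)

lemma rsumI: "(a, b) \<in> L1 \<Longrightarrow> (a', b') \<in> L2 \<Longrightarrow> (a @ a', b @ b') \<in> rsum L1 L2"
  by (auto simp: rsum_def)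

lemma rsumE:
  assumes "p \<in> rsum L1 L2"
  obtains a b a' b' where "p = (a @ a', b @ b')" "(a, b) \<in> L1" "(a', b') \<in> L2"
  using assms by (auto simp: rsum_def)

lemma rsum_append_iff:
  assumes "L1 \<subseteq> vecs n1 \<times> vecs m1" "length a = n1" "length b = m1"
  shows "(a @ a', b @ b') \<in> rsum L1 L2 \<longleftrightarrow> (a, b) \<in> L1 \<and> (a', b') \<in> L2"
  using assms by (auto simp: rsum_def)

lemma rsum_assoc: "rsum (rsum A B) C = rsum A (rsum B C)"
proof (intro equalityI subsetI)
  fix p assume "p \<in> rsum (rsum A B) C"
  then obtain a b c a' b' c' where "p = ((a @ b) @ c, (a' @ b') @ c')"
    "(a, a') \<in> A" "(b, b') \<in> B" "(c, c') \<in> C"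
    by (auto elim!: rsumE)
  then show "p \<in> rsum A (rsum B C)" by (simp add: rsumI)
next
  fix p assume "p \<in> rsum A (rsum B C)"
  then obtain a b c a' b' c' where "p = (a @ (b @ c), a' @ (b' @ c'))"
    "(a, a') \<in> A" "(b, b') \<in> B" "(c, c') \<in> C"
    by (auto elim!: rsumE)
  then show "p \<in> rsum (rsum A B) C" using rsumI [OF rsumI] by (metis append.assoc)
qed

lemma rsum_idrel: "rsum (idrel k) (idrel l) = idrel (k + l)"
proof (intro equalityI subsetI)
  fix p assume "p \<in> rsum (idrel k) (idrel l)"
  then show "p \<in> idrel (k + l)" by (auto elim!: rsumE simp: idrel_def)
next
  fix p assume "p \<in> idrel (k + l)"
  then obtain v v' where "p = (v @ v', v @ v')" "length v = k" "length v' = l"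
    by (auto simp: idrel_def elim: length_add_split)
  then show "p \<in> rsum (idrel k) (idrel l)" by (auto intro: rsumI simp: idrel_def)
qed

lemma rsum_Pvecs:
  "rsum (Pvecs r \<times> Pvecs s) (Pvecs r' \<times> Pvecs s') =
    (Pvecs (r + r') \<times> Pvecs (s + s') :: (('a::zero) svec \<times> 'a svec) set)"
proof (intro equalityI subsetI)
  fix p assume "p \<in> rsum (Pvecs r \<times> Pvecs s) (Pvecs r' \<times> Pvecs s')"
  then show "p \<in> Pvecs (r + r') \<times> Pvecs (s + s')"
    by (fastforce elim!: rsumE simp: Pvecs_def)
next
  fix p :: "'a svec \<times> 'a svec" assume p: "p \<in> Pvecs (r + r') \<times> Pvecs (s + s')"
  obtain q q' where q: "fst p = q @ q'" "length q = r" "length q' = r'"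
    using p by (auto simp: Pvecs_def elim: length_add_split)
  obtain t t' where t: "snd p = t @ t'" "length t = s" "length t' = s'"
    using p by (auto simp: Pvecs_def elim: length_add_split)
  show "p \<in> rsum (Pvecs r \<times> Pvecs s) (Pvecs r' \<times> Pvecs s')"
    using p q t Pvecs_append [OF q(2)] Pvecs_append [OF t(2)]
    by (cases p) (auto intro: rsumI)
qed

lemma image_rsum_sum_map:
  assumes "L1 \<subseteq> vecs n1 \<times> vecs m1"
  shows "map_prod (sum_map n1 S1 S2) (sum_map m1 T1 T2) ` rsum L1 L2 =
    rsum (map_prod S1 T1 ` L1) (map_prod S2 T2 ` L2)"
proof (intro equalityI subsetI)
  fix p assume "p \<in> map_prod (sum_map n1 S1 S2) (sum_map m1 T1 T2) ` rsum L1 L2"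
  then obtain a b a' b' where "p = (sum_map n1 S1 S2 (a @ a'), sum_map m1 T1 T2 (b @ b'))"
    "(a, b) \<in> L1" "(a', b') \<in> L2"
    by (auto elim!: rsumE)
  then show "p \<in> rsum (map_prod S1 T1 ` L1) (map_prod S2 T2 ` L2)"
    using assms by (auto intro!: rsumI map_prod_imageI)
next
  fix p assume "p \<in> rsum (map_prod S1 T1 ` L1) (map_prod S2 T2 ` L2)"
  then obtain a b a' b' where "p = (S1 a @ S2 a', T1 b @ T2 b')" "(a, b) \<in> L1" "(a', b') \<in> L2"
    by (auto elim!: rsumE map_prod_imageE)
  moreover from this have "p = map_prod (sum_map n1 S1 S2) (sum_map m1 T1 T2) (a @ a', b @ b')"
    using assms by auto
  ultimately show "p \<in> map_prod (sum_map n1 S1 S2) (sum_map m1 T1 T2) ` rsum L1 L2"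
    by (blast intro: rsumI image_eqI)
qed

lemma lin_lagrangian_rel_rsum_fst:
  fixes L1 L2 :: "(('a::field) svec \<times> 'a svec) set"
  assumes L: "lin_lagrangian_rel (n1 + n2) (m1 + m2) (rsum L1 L2)"
    and L1: "L1 \<subseteq> vecs n1 \<times> vecs m1" "(vzero n1, vzero m1) \<in> L1"
    and L2: "(vzero n2, vzero m2) \<in> L2"
  shows "lin_lagrangian_rel n1 m1 L1"
proof -
  have len1: "length a = n1" "length b = m1" if "(a, b) \<in> L1" for a b
    using that L1(1) by auto
  have embed: "(a @ vzero n2, b @ vzero m2) \<in> rsum L1 L2" if "(a, b) \<in> L1" for a b
    using that L2 by (rule rsumI)
  have restrict: "(a, b) \<in> L1"
    if "(a @ vzero n2, b @ vzero m2) \<in> rsum L1 L2" "length a = n1" "length b = m1" for a b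
    using that rsum_append_iff [OF L1(1)] by blast
  show ?thesis
  proof (rule lin_lagrangian_relI)
    show "(vadd a c, vadd b d) \<in> L1" if ab: "(a, b) \<in> L1" and cd: "(c, d) \<in> L1" for a b c d
      using lagrangian_vadd [OF L embed [OF ab] embed [OF cd]] len1 [OF ab] len1 [OF cd]
      by (intro restrict) (simp_all add: vadd_append)
    show "(vscale t a, vscale t b) \<in> L1" if ab: "(a, b) \<in> L1" for t a b
      using lagrangian_vscale [OF L embed [OF ab], of t] len1 [OF ab]
      by (intro restrict) (simp_all add: vscale_append)
    show "omega a c = omega b d" if ab: "(a, b) \<in> L1" and cd: "(c, d) \<in> L1" for a b c d
      using lagrangian_isotropic [OF L embed [OF ab] embed [OF cd]] len1 [OF ab] len1 [OF cd]
      by (simp add: omega_append)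
    show "(a, b) \<in> L1"
      if ab: "length a = n1" "length b = m1"
        and orth: "\<And>c d. (c, d) \<in> L1 \<Longrightarrow> omega a c = omega b d" for a b
    proof (rule restrict [OF lagrangian_coisotropic [OF L] ab])
      fix x y assume "(x, y) \<in> rsum L1 L2"
      then obtain c d c' d' where cd: "x = c @ c'" "y = d @ d'" "(c, d) \<in> L1" "(c', d') \<in> L2"
        by (auto elim: rsumE)
      then show "omega (a @ vzero n2) x = omega (b @ vzero m2) y"
        using ab orth [OF cd(3)] len1 [OF cd(3)] by (simp add: omega_append)
    qed (use ab in simp_all)
  qed (use len1 L1(2) in auto)
qed

lemma lin_lagrangian_rel_rsum_snd:
  fixes L1 L2 :: "(('a::field) svec \<times> 'a svec) set"
  assumes L: "lin_lagrangian_rel (n1 + n2) (m1 + m2) (rsum L1 L2)"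
    and L1: "L1 \<subseteq> vecs n1 \<times> vecs m1" "(vzero n1, vzero m1) \<in> L1"
    and L2: "L2 \<subseteq> vecs n2 \<times> vecs m2" "(vzero n2, vzero m2) \<in> L2"
  shows "lin_lagrangian_rel n2 m2 L2"
proof -
  have embed: "(vzero n1 @ a, vzero m1 @ b) \<in> rsum L1 L2" if "(a, b) \<in> L2" for a b
    using L1(2) that by (rule rsumI)
  have restrict: "(a, b) \<in> L2" if "(vzero n1 @ a, vzero m1 @ b) \<in> rsum L1 L2" for a b
    using that rsum_append_iff [OF L1(1)] by simp
  show ?thesis
  proof (rule lin_lagrangian_relI)
    show "(vadd a c, vadd b d) \<in> L2" if ab: "(a, b) \<in> L2" and cd: "(c, d) \<in> L2" for a b c d
      using lagrangian_vadd [OF L embed [OF ab] embed [OF cd]]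
      by (intro restrict) (simp add: vadd_append)
    show "(vscale t a, vscale t b) \<in> L2" if ab: "(a, b) \<in> L2" for t a b
      using lagrangian_vscale [OF L embed [OF ab], of t]
      by (intro restrict) (simp add: vscale_append)
    show "omega a c = omega b d" if ab: "(a, b) \<in> L2" and cd: "(c, d) \<in> L2" for a b c d
      using lagrangian_isotropic [OF L embed [OF ab] embed [OF cd]] by (simp add: omega_append)
    show "(a, b) \<in> L2"
      if ab: "length a = n2" "length b = m2"
        and orth: "\<And>c d. (c, d) \<in> L2 \<Longrightarrow> omega a c = omega b d" for a b
    proof (rule restrict [OF lagrangian_coisotropic [OF L]])
      fix x y assume "(x, y) \<in> rsum L1 L2"
      then obtain c d c' d' where cd: "x = c @ c'" "y = d @ d'" "(c, d) \<in> L1" "(c', d') \<in> L2"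
        by (auto elim: rsumE)
      then show "omega (vzero n1 @ a) x = omega (vzero m1 @ b) y"
        using orth [OF cd(4)] L1(1) by (auto simp: omega_append)
    qed (use ab in simp_all)
  qed (use L2 in auto)
qed

lemma rsum_split_front:
  fixes L L1 :: "(('a::field) svec \<times> 'a svec) set"
  assumes L: "lin_lagrangian_rel (n1 + n2) (m1 + m2) L" and L1: "lin_lagrangian_rel n1 m1 L1"
    and sub: "rsum L1 {(vzero n2, vzero m2)} \<subseteq> L"
  shows "L = rsum L1 {(a, b). (vzero n1 @ a, vzero m1 @ b) \<in> L}"
proof -
  have embed: "(c @ vzero n2, d @ vzero m2) \<in> L" if "(c, d) \<in> L1" for c d
    using sub that by (auto intro: rsumI)
  show ?thesis
  proof (intro equalityI subsetI)
    fix p assume p: "p \<in> L"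
    obtain x y where xy: "p = (x, y)" by (cases p)
    obtain a a' where x: "x = a @ a'" "length a = n1" "length a' = n2"
      using lagrangian_length [OF L p [unfolded xy]] by (auto elim: length_add_split)
    obtain b b' where y: "y = b @ b'" "length b = m1" "length b' = m2"
      using lagrangian_length [OF L p [unfolded xy]] by (auto elim: length_add_split)
    have pL: "(a @ a', b @ b') \<in> L" using p xy x(1) y(1) by simp
    have ab: "(a, b) \<in> L1"
    proof (rule lagrangian_coisotropic [OF L1 x(2) y(2)])
      fix c d assume cd: "(c, d) \<in> L1"
      have "omega (a @ a') (c @ vzero n2) = omega (b @ b') (d @ vzero m2)"
        using lagrangian_isotropic [OF L pL embed [OF cd]] .
      then show "omega a c = omega b d"
        using x y lagrangian_length [OF L1 cd] by (simp add: omega_append)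
    qed
    have "(vsub (a @ a') (a @ vzero n2), vsub (b @ b') (b @ vzero m2)) \<in> L"
      by (rule lagrangian_vsub [OF L pL embed [OF ab]])
    then have "(vzero n1 @ a', vzero m1 @ b') \<in> L"
      using x y by (simp add: vsub_append)
    then show "p \<in> rsum L1 {(a, b). (vzero n1 @ a, vzero m1 @ b) \<in> L}"
      using ab xy x y by (auto intro: rsumI)
  next
    fix p assume "p \<in> rsum L1 {(a, b). (vzero n1 @ a, vzero m1 @ b) \<in> L}"
    then obtain c d c' d' where p: "p = (c @ c', d @ d')" and cd: "(c, d) \<in> L1"
      and c'd': "(vzero n1 @ c', vzero m1 @ d') \<in> L"
      by (auto elim: rsumE)
    have "length c = n1" "length d = m1" "length c' = n2" "length d' = m2"
      using lagrangian_length [OF L1 cd] lagrangian_length [OF L c'd'] by simp_all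
    then show "p \<in> L"
      using lagrangian_vadd [OF L embed [OF cd] c'd'] p by (simp add: vadd_append)
  qed
qed

lemma lin_lagrangian_rel_split_front:
  fixes L L1 :: "(('a::field) svec \<times> 'a svec) set"
  assumes L: "lin_lagrangian_rel (n1 + n2) (m1 + m2) L" and L1: "lin_lagrangian_rel n1 m1 L1"
    and sub: "rsum L1 {(vzero n2, vzero m2)} \<subseteq> L"
  obtains L2 where "lin_lagrangian_rel n2 m2 L2" "L = rsum L1 L2"
proof
  let ?L2 = "{(a, b). (vzero n1 @ a, vzero m1 @ b) \<in> L}"
  show eq: "L = rsum L1 ?L2" by (rule rsum_split_front [OF L L1 sub])
  show "lin_lagrangian_rel n2 m2 ?L2"
  proof (rule lin_lagrangian_rel_rsum_snd)
    show "lin_lagrangian_rel (n1 + n2) (m1 + m2) (rsum L1 ?L2)" using L eq by simp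
    show "?L2 \<subseteq> vecs n2 \<times> vecs m2" using lagrangian_length [OF L] by fastforce
    show "(vzero n2, vzero m2) \<in> ?L2" using lagrangian_vzero [OF L] by (simp add: vzero_add)
  qed (use lagrangian_subset [OF L1] lagrangian_vzero [OF L1] in auto)
qed

lemma rsum_split_back:
  fixes L L2 :: "(('a::field) svec \<times> 'a svec) set"
  assumes L: "lin_lagrangian_rel (n1 + n2) (m1 + m2) L" and L2: "lin_lagrangian_rel n2 m2 L2"
    and sub: "rsum {(vzero n1, vzero m1)} L2 \<subseteq> L"
  shows "L = rsum {(a, b). (a @ vzero n2, b @ vzero m2) \<in> L} L2"
proof -
  have embed: "(vzero n1 @ c, vzero m1 @ d) \<in> L" if "(c, d) \<in> L2" for c d
    using sub that by (auto intro: rsumI)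
  show ?thesis
  proof (intro equalityI subsetI)
    fix p assume p: "p \<in> L"
    obtain x y where xy: "p = (x, y)" by (cases p)
    obtain a a' where x: "x = a @ a'" "length a = n1" "length a' = n2"
      using lagrangian_length [OF L p [unfolded xy]] by (auto elim: length_add_split)
    obtain b b' where y: "y = b @ b'" "length b = m1" "length b' = m2"
      using lagrangian_length [OF L p [unfolded xy]] by (auto elim: length_add_split)
    have pL: "(a @ a', b @ b') \<in> L" using p xy x(1) y(1) by simp
    have ab: "(a', b') \<in> L2"
    proof (rule lagrangian_coisotropic [OF L2 x(3) y(3)])
      fix c d assume cd: "(c, d) \<in> L2"
      have "omega (a @ a') (vzero n1 @ c) = omega (b @ b') (vzero m1 @ d)"
        using lagrangian_isotropic [OF L pL embed [OF cd]] .
      then show "omega a' c = omega b' d"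
        using x y by (simp add: omega_append)
    qed
    have "(vsub (a @ a') (vzero n1 @ a'), vsub (b @ b') (vzero m1 @ b')) \<in> L"
      by (rule lagrangian_vsub [OF L pL embed [OF ab]])
    then have "(a @ vzero n2, b @ vzero m2) \<in> L"
      using x y by (simp add: vsub_append)
    then show "p \<in> rsum {(a, b). (a @ vzero n2, b @ vzero m2) \<in> L} L2"
      using ab xy x y by (auto intro: rsumI)
  next
    fix p assume "p \<in> rsum {(a, b). (a @ vzero n2, b @ vzero m2) \<in> L} L2"
    then obtain c d c' d' where p: "p = (c @ c', d @ d')"
      and cd: "(c @ vzero n2, d @ vzero m2) \<in> L" and c'd': "(c', d') \<in> L2"
      by (auto elim: rsumE)
    have "length c = n1" "length d = m1" "length c' = n2" "length d' = m2"
      using lagrangian_length [OF L2 c'd'] lagrangian_length [OF L cd] by simp_all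
    then show "p \<in> L"
      using lagrangian_vadd [OF L cd embed [OF c'd']] p by (simp add: vadd_append)
  qed
qed

lemma lin_lagrangian_rel_split_back:
  fixes L L2 :: "(('a::field) svec \<times> 'a svec) set"
  assumes L: "lin_lagrangian_rel (n1 + n2) (m1 + m2) L" and L2: "lin_lagrangian_rel n2 m2 L2"
    and sub: "rsum {(vzero n1, vzero m1)} L2 \<subseteq> L"
  obtains L1 where "lin_lagrangian_rel n1 m1 L1" "L = rsum L1 L2"
proof
  let ?L1 = "{(a, b). (a @ vzero n2, b @ vzero m2) \<in> L}"
  show eq: "L = rsum ?L1 L2" by (rule rsum_split_back [OF L L2 sub])
  show "lin_lagrangian_rel n1 m1 ?L1"
  proof (rule lin_lagrangian_rel_rsum_fst)
    show "lin_lagrangian_rel (n1 + n2) (m1 + m2) (rsum ?L1 L2)" using L eq by simp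
    show "?L1 \<subseteq> vecs n1 \<times> vecs m1" using lagrangian_length [OF L] by fastforce
    show "(vzero n1, vzero m1) \<in> ?L1" using lagrangian_vzero [OF L] by (simp add: vzero_add)
  qed (rule lagrangian_vzero [OF L2])
qed

definition normal_rel :: "nat \<Rightarrow> nat \<Rightarrow> nat \<Rightarrow> (('a::zero) svec \<times> 'a svec) set" where
  "normal_rel n m k = rsum (idrel k) (Pvecs (n - k) \<times> Pvecs (m - k))"

lemma normal_rel_converse: "(normal_rel n m k)\<inverse> = normal_rel m n k"
  by (auto simp: normal_rel_def rsum_def idrel_def)

lemma normal_rel_0 [simp]: "normal_rel 0 0 0 = {([], [])}"
  by (simp add: normal_rel_def rsum_def idrel_def)

lemma rsum_idrel_normal_rel:
  "rsum (idrel 1) (normal_rel n m k) = normal_rel (Suc n) (Suc m) (Suc k)"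
  by (simp add: normal_rel_def rsum_assoc [symmetric] rsum_idrel)

lemma rsum_normal_rel_Pvecs:
  "k \<le> n \<Longrightarrow> rsum (normal_rel n m k) (Pvecs 1 \<times> {[]}) = normal_rel (Suc n) m k"
  by (simp add: normal_rel_def rsum_assoc rsum_Pvecs [of _ _ 1 0, simplified] Suc_diff_le)

definition has_normal_form :: "nat \<Rightarrow> nat \<Rightarrow> (('a::field) svec \<times> 'a svec) set \<Rightarrow> bool" where
  "has_normal_form n m L \<longleftrightarrow> (\<exists>k S T. k \<le> min n m \<and> lin_symp n S \<and> lin_symp m T \<and>
     map_prod S T ` L = normal_rel n m k)"

lemma has_normal_form_image:
  assumes S0: "lin_symp n S0" and T0: "lin_symp m T0"
    and nf: "has_normal_form n m (map_prod S0 T0 ` L)"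
  shows "has_normal_form n m L"
proof -
  obtain k S T where "k \<le> min n m" "lin_symp n S" "lin_symp m T"
    "map_prod S T ` map_prod S0 T0 ` L = normal_rel n m k"
    using nf by (auto simp: has_normal_form_def)
  then show ?thesis
    unfolding has_normal_form_def image_comp map_prod_compose [symmetric]
    using S0 T0 lin_symp_comp by blast
qed

lemma has_normal_form_converse:
  assumes "has_normal_form m n (L\<inverse>)"
  shows "has_normal_form n m L"
proof -
  obtain k S T where "k \<le> min m n" "lin_symp m S" "lin_symp n T"
    "map_prod S T ` L\<inverse> = normal_rel m n k"
    using assms by (auto simp: has_normal_form_def)
  moreover have "map_prod T S ` L = (map_prod S T ` L\<inverse>)\<inverse>" by auto
  ultimately show ?thesis
    unfolding has_normal_form_def by (metis min.commute normal_rel_converse)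
qed

lemma has_normal_form_rsum_idrel:
  assumes "has_normal_form n m L"
  shows "has_normal_form (Suc n) (Suc m) (rsum (idrel 1) L)"
proof -
  obtain k S T where k: "k \<le> min n m" and S: "lin_symp n S" and T: "lin_symp m T"
    and eq: "map_prod S T ` L = normal_rel n m k"
    using assms by (auto simp: has_normal_form_def)
  have "map_prod (sum_map 1 id S) (sum_map 1 id T) ` rsum (idrel 1) L =
      rsum (map_prod id id ` idrel 1) (map_prod S T ` L)"
    by (rule image_rsum_sum_map) (auto simp: idrel_def)
  also have "\<dots> = normal_rel (Suc n) (Suc m) (Suc k)"
    unfolding eq map_prod.id image_id id_apply by (rule rsum_idrel_normal_rel)
  finally show ?thesis
    unfolding has_normal_form_def
    using k lin_symp_sum_map [OF lin_symp_id [of 1] S] lin_symp_sum_map [OF lin_symp_id [of 1] T]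
    by (intro exI [of _ "Suc k"] exI [of _ "sum_map 1 id S"] exI [of _ "sum_map 1 id T"]) auto
qed

lemma has_normal_form_rsum_Pvecs:
  assumes "has_normal_form n m L" and "L \<subseteq> vecs n \<times> vecs m"
  shows "has_normal_form (Suc n) m (rsum L (Pvecs 1 \<times> {[]}))"
proof -
  obtain k S T where k: "k \<le> min n m" and S: "lin_symp n S" and T: "lin_symp m T"
    and eq: "map_prod S T ` L = normal_rel n m k"
    using assms(1) by (auto simp: has_normal_form_def)
  have "map_prod (sum_map n S id) (sum_map m T id) ` rsum L (Pvecs 1 \<times> {[]}) =
      rsum (map_prod S T ` L) (map_prod id id ` (Pvecs 1 \<times> {[]}))"
    by (rule image_rsum_sum_map [OF assms(2)])
  also have "\<dots> = normal_rel (Suc n) m k"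
    unfolding eq map_prod.id image_id id_apply using k by (intro rsum_normal_rel_Pvecs) simp
  finally show ?thesis
    unfolding has_normal_form_def
    using k lin_symp_sum_map [OF S lin_symp_id [of 1]] lin_symp_sum_map [OF T lin_symp_id [of 0]]
    by (intro exI [of _ k] exI [of _ "sum_map n S id"] exI [of _ "sum_map m T id"]) auto
qed

lemma has_normal_form_kernel:
  fixes L :: "(('a::field) svec \<times> 'a svec) set"
  assumes L: "lin_lagrangian_rel (Suc n) m L" and v: "v \<noteq> vzero (Suc n)" "(v, vzero m) \<in> L"
    and IH: "\<And>L' :: ('a svec \<times> 'a svec) set. lin_lagrangian_rel n m L' \<Longrightarrow> has_normal_form n m L'"
  shows "has_normal_form (Suc n) m L"
proof -
  define e :: "'a svec" where "e = vzero n @ [(0, 1)]"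
  have "length e = Suc n" "e \<noteq> vzero (Suc n)"
    by (simp_all add: e_def vzero_def replicate_append_same [symmetric])
  then obtain S0 where S0: "lin_symp (Suc n) S0" "S0 v = e"
    using lin_symp_transitive lagrangian_length [OF L v(2)] v(1) by metis
  let ?L = "map_prod S0 id ` L"
  have L': "lin_lagrangian_rel (n + 1) (m + 0) ?L"
    using lin_lagrangian_rel_image [OF L S0(1) lin_symp_id] by simp
  have e: "(e, vzero m) \<in> ?L" using map_prod_imageI [OF v(2), of S0 id] S0(2) by simp
  have "(vzero n @ q, vzero m @ []) \<in> ?L" if q: "q \<in> Pvecs 1" for q
  proof -
    obtain x where "q = [(0, x)]" using q by (auto simp: Pvecs_def length_Suc_conv)
    then show ?thesis using lagrangian_vscale [OF L' e, of x] by (simp add: e_def vscale_append)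
  qed
  then have "rsum {(vzero n, vzero m)} (Pvecs 1 \<times> {[]}) \<subseteq> ?L"
    by (auto elim!: rsumE)
  then obtain L1 where L1: "lin_lagrangian_rel n m L1" "?L = rsum L1 (Pvecs 1 \<times> {[]})"
    using lin_lagrangian_rel_split_back [OF L' lin_lagrangian_rel_Pvecs] by blast
  have "has_normal_form (Suc n) m ?L"
    unfolding L1(2)
    by (rule has_normal_form_rsum_Pvecs [OF IH [OF L1(1)] lagrangian_subset [OF L1(1)]])
  then show ?thesis by (rule has_normal_form_image [OF S0(1) lin_symp_id])
qed

lemma has_normal_form_symplectic_pair:
  fixes L :: "(('a::field) svec \<times> 'a svec) set"
  assumes L: "lin_lagrangian_rel (Suc n) (Suc m) L"
    and ab: "(a, b) \<in> L" and cd: "(c, d) \<in> L" and ac: "omega a c = 1"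
    and IH: "\<And>L' :: ('a svec \<times> 'a svec) set. lin_lagrangian_rel n m L' \<Longrightarrow> has_normal_form n m L'"
  shows "has_normal_form (Suc n) (Suc m) L"
proof -
  have bd: "omega b d = 1" using lagrangian_isotropic [OF L ab cd] ac by simp
  obtain S0 where S0: "lin_symp (Suc n) S0" "S0 a = e1 n" "S0 c = f1 n"
    using lin_symp_transitive_pairs lagrangian_length [OF L ab] lagrangian_length [OF L cd] ac
    by metis
  obtain T0 where T0: "lin_symp (Suc m) T0" "T0 b = e1 m" "T0 d = f1 m"
    using lin_symp_transitive_pairs lagrangian_length [OF L ab] lagrangian_length [OF L cd] bd
    by metis
  let ?L = "map_prod S0 T0 ` L"
  have L': "lin_lagrangian_rel (1 + n) (1 + m) ?L"
    using lin_lagrangian_rel_image [OF L S0(1) T0(1)] by simp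
  have e: "(e1 n, e1 m) \<in> ?L" and f: "(f1 n, f1 m) \<in> ?L"
    using map_prod_imageI [OF ab, of S0 T0] map_prod_imageI [OF cd, of S0 T0] S0 T0 by simp_all
  have "([t] @ vzero n, [t] @ vzero m) \<in> ?L" for t
  proof -
    obtain z x where "t = (z, x)" by (cases t)
    then show ?thesis
      using lagrangian_vadd [OF L' lagrangian_vscale [OF L' e, of z]
          lagrangian_vscale [OF L' f, of x]]
      by (simp add: e1_def f1_def)
  qed
  then have "rsum (idrel 1) {(vzero n, vzero m)} \<subseteq> ?L"
    by (auto elim!: rsumE simp: idrel_def length_Suc_conv)
  then obtain L2 where L2: "lin_lagrangian_rel n m L2" "?L = rsum (idrel 1) L2"
    using lin_lagrangian_rel_split_front [OF L' lin_lagrangian_rel_idrel] by blast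
  have "has_normal_form (Suc n) (Suc m) ?L"
    unfolding L2(2) by (rule has_normal_form_rsum_idrel [OF IH [OF L2(1)]])
  then show ?thesis by (rule has_normal_form_image [OF S0(1) T0(1)])
qed

lemma has_normal_form_trivial:
  fixes L :: "(('a::field) svec \<times> 'a svec) set"
  assumes L: "lin_lagrangian_rel n m L" and sub: "L \<subseteq> {(vzero n, vzero m)}"
  shows "has_normal_form n m L"
proof -
  have "n = 0" "m = 0" using lin_lagrangian_rel_zero_dims [OF L sub] by simp_all
  moreover have "L = {([], [])}"
    using sub lagrangian_vzero [OF L] \<open>n = 0\<close> \<open>m = 0\<close> by auto
  ultimately show ?thesis
    unfolding has_normal_form_def using lin_symp_id by (intro exI [of _ 0] exI [of _ id]) auto
qed

lemma lagrangian_symplectic_partner: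
  fixes L :: "(('a::field) svec \<times> 'a svec) set"
  assumes L: "lin_lagrangian_rel n m L" and ab: "(a, b) \<in> L" and "(a, vzero m) \<notin> L"
  obtains c d where "(c, d) \<in> L" "omega a c = 1"
proof -
  obtain c d where cd: "(c, d) \<in> L" and ac: "omega a c \<noteq> 0"
    using lagrangian_coisotropic [OF L _ _, of a "vzero m"] lagrangian_length [OF L ab] assms(3)
    by force
  show ?thesis
    using that [OF lagrangian_vscale [OF L cd, of "1 / omega a c"]] ac
    by (simp add: omega_vscale_right)
qed

lemma lin_lagrangian_rel_has_normal_form:
  fixes L :: "(('a::field) svec \<times> 'a svec) set"
  assumes "lin_lagrangian_rel n m L"
  shows "has_normal_form n m L"
  using assms
proof (induction "n + m" arbitrary: n m L rule: less_induct)
  case less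
  note L = less.prems
  have IH: "has_normal_form n' m' L'"
    if "n' + m' < n + m" "lin_lagrangian_rel n' m' L'" for n' m' and L' :: "('a svec \<times> 'a svec) set"
    using less.hyps that by blast
  consider (kernel) v where "v \<noteq> vzero n" "(v, vzero m) \<in> L"
    | (cokernel) w where "w \<noteq> vzero m" "(vzero n, w) \<in> L"
    | (trivial) "L \<subseteq> {(vzero n, vzero m)}"
    | (graph) a b where "(a, b) \<in> L" "a \<noteq> vzero n" "(a, vzero m) \<notin> L"
    by (metis (no_types, lifting) insertI1 prod.inject singletonD subrelI)
  then show ?case
  proof cases
    case kernel
    then obtain n' where n: "n = Suc n'"
      using lagrangian_length [OF L kernel(2)] by (cases n) auto
    show ?thesis
      using L kernel unfolding n
      by (intro has_normal_form_kernel [of n' m L v]) (simp_all add: IH n)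
  next
    case cokernel
    then obtain m' where m: "m = Suc m'"
      using lagrangian_length [OF L cokernel(2)] by (cases m) auto
    have "has_normal_form m n (L\<inverse>)"
      using has_normal_form_kernel [of m' n "L\<inverse>" w] lin_lagrangian_rel_converse [OF L]
        cokernel IH m by simp
    then show ?thesis by (rule has_normal_form_converse)
  next
    case trivial
    then show ?thesis by (rule has_normal_form_trivial [OF L])
  next
    case graph
    obtain c d where cd: "(c, d) \<in> L" and ac: "omega a c = 1"
      using lagrangian_symplectic_partner [OF L graph(1,3)] by blast
    have "b \<noteq> vzero m"
      using lagrangian_isotropic [OF L graph(1) cd] ac by auto
    then obtain n' m' where nm: "n = Suc n'" "m = Suc m'"
      using graph(2) lagrangian_length [OF L graph(1)] by (cases n; cases m) auto
    then show ?thesis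
      using has_normal_form_symplectic_pair [of n' m' L a b c d] L graph(1) cd ac IH by simp
  qed
qed

lemma rsum_relcomp:
  assumes "\<And>a b. (a, b) \<in> R1 \<Longrightarrow> length b = k" "\<And>a b. (a, b) \<in> S1 \<Longrightarrow> length a = k"
  shows "rsum R1 R2 O rsum S1 S2 = rsum (R1 O S1) (R2 O S2)"
proof (intro equalityI subsetI)
  fix p assume "p \<in> rsum R1 R2 O rsum S1 S2"
  then obtain a a' b b' c c' d d' where p: "p = (a @ a', d @ d')" and eq: "b @ b' = c @ c'"
    and "(a, b) \<in> R1" "(a', b') \<in> R2" "(c, d) \<in> S1" "(c', d') \<in> S2"
    by (auto elim!: rsumE)
  moreover from this have "b = c" "b' = c'" using eq assms by auto
  ultimately show "p \<in> rsum (R1 O S1) (R2 O S2)" by (auto intro: rsumI)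
next
  fix p assume "p \<in> rsum (R1 O S1) (R2 O S2)"
  then show "p \<in> rsum R1 R2 O rsum S1 S2" by (auto elim!: rsumE intro: rsumI)
qed

lemma Prel_eq: "Prel r = {[]} \<times> Pvecs r"
proof (intro equalityI subsetI)
  fix p :: "('a svec \<times> 'a svec)" assume "p \<in> {[]} \<times> Pvecs r"
  then obtain q where q: "p = ([], q)" "q \<in> Pvecs r" by auto
  then have "q = map (\<lambda>x. (0, x)) (map snd q)" "length (map snd q) = r"
    by (auto intro!: nth_equalityI simp: Pvecs_def prod_eq_iff)
  then show "p \<in> Prel r" unfolding Prel_def q(1) by blast
qed (auto simp: Prel_def Pvecs_def)

lemma negx_Nil [simp]: "negx [] = []"
  by (simp add: negx_def)

lemma negx_negx [simp]: "negx (negx q) = (q :: ('a::ring) svec)"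
  by (simp add: negx_def case_prod_beta comp_def)

lemma negx_Pvecs [simp]: "negx q \<in> Pvecs r \<longleftrightarrow> q \<in> (Pvecs r :: ('a::ring) svec set)"
  by (auto simp: negx_def Pvecs_def case_prod_beta)

lemma dagger_Prel: "dagger (Prel r) = Pvecs r \<times> {[] :: ('a::ring) svec}"
proof (intro equalityI subsetI)
  fix p :: "'a svec \<times> 'a svec" assume "p \<in> dagger (Prel r)"
  then show "p \<in> Pvecs r \<times> {[]}" by (auto simp: dagger_def Prel_eq)
next
  fix p :: "'a svec \<times> 'a svec" assume "p \<in> Pvecs r \<times> {[]}"
  then obtain q where q: "p = (q, [])" "q \<in> Pvecs r" by auto
  then have "([], negx q) \<in> Prel r" by (simp add: Prel_eq)
  then have "(negx (negx q), negx []) \<in> dagger (Prel r)" unfolding dagger_def by blast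
  then show "p \<in> dagger (Prel r)" using q(1) by simp
qed

lemma normal_rel_eq_relcomp:
  assumes "k \<le> n" "k \<le> m"
  shows "rsum (idrel k) (dagger (Prel (n - k))) O rsum (idrel k) (Prel (m - k)) =
    (normal_rel n m k :: (('a::ring) svec \<times> 'a svec) set)"
proof -
  have "rsum (idrel k) (dagger (Prel (n - k))) O rsum (idrel k) (Prel (m - k)) =
      (rsum (idrel k O idrel k) ((Pvecs (n - k) \<times> {[] :: 'a svec}) O ({[]} \<times> Pvecs (m - k))) ::
        ('a svec \<times> 'a svec) set)"
    unfolding dagger_Prel unfolding Prel_eq by (subst rsum_relcomp [of _ k]) (auto simp: idrel_def)
  also have "\<dots> = normal_rel n m k"
  proof -
    have "idrel k O idrel k = (idrel k :: ('a svec \<times> 'a svec) set)" by (auto simp: idrel_def)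
    moreover have "(A \<times> {[] :: 'a svec}) O ({[]} \<times> B) = A \<times> B" for A B :: "'a svec set"
      by auto
    ultimately show ?thesis by (simp add: normal_rel_def)
  qed
  finally show ?thesis .
qed

lemma graph_relcomp_iff:
  "(x, y) \<in> graph n S O R O graph m T \<longleftrightarrow>
    length x = n \<and> (\<exists>w. (S x, w) \<in> R \<and> length w = m \<and> y = T w)"
  by (auto simp: graph_def)

lemma graph_relcomp_of_image:
  fixes L :: "(('a::field) svec \<times> 'a svec) set"
  assumes L: "L \<subseteq> vecs n \<times> vecs m" and S: "lin_symp n S" and T: "lin_symp m T"
  obtains T' where "lin_symp m T'" "L = graph n S O map_prod S T ` L O graph m T'"
proof -
  obtain T' where T': "lin_symp m T'" "\<And>w. length w = m \<Longrightarrow> T' (T w) = w"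
    using lin_symp_inverse [OF T] by blast
  have "L = graph n S O map_prod S T ` L O graph m T'"
  proof (intro equalityI subrelI)
    fix x y assume xy: "(x, y) \<in> L"
    then have "length x = n" "length (T y) = m" "y = T' (T y)"
      using L lin_symp_vecs [OF T] T'(2) by auto
    then show "(x, y) \<in> graph n S O map_prod S T ` L O graph m T'"
      unfolding graph_relcomp_iff using map_prod_imageI [OF xy, of S T]
      by (intro conjI exI [of _ "T y"]) auto
  next
    fix x y assume "(x, y) \<in> graph n S O map_prod S T ` L O graph m T'"
    then obtain x' y' where xy': "(x', y') \<in> L" "S x = S x'" "length x = n" "y = T' (T y')"
      by (auto simp: graph_relcomp_iff elim!: map_prod_imageE)
    moreover have "x = x'" "y = y'"
      using xy' L lin_symp_inj [OF S] T'(2) by auto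
    ultimately show "(x, y) \<in> L" by simp
  qed
  then show ?thesis using that T'(1) by blast
qed

lemma image_padd_graph_relcomp:
  fixes S T :: "('a::field) svec \<Rightarrow> 'a svec"
  assumes S: "lin_symp n S" and a: "length a1 = n"
  shows "padd (a1, a2) ` (graph n S O R O graph m T) =
    graph n (\<lambda>v. vsub (S v) (S a1)) O R O graph m (\<lambda>w. vadd (T w) a2)"
proof (intro equalityI subsetI)
  fix p assume "p \<in> padd (a1, a2) ` (graph n S O R O graph m T)"
  then obtain x y where p: "p = padd (a1, a2) (x, y)" and "(x, y) \<in> graph n S O R O graph m T"
    by auto
  then obtain w where x: "length x = n" and w: "(S x, w) \<in> R" "length w = m" "y = T w"
    by (auto simp: graph_relcomp_iff)
  have "S (vadd a1 x) = vadd (S x) (S a1)"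
    using lin_symp_vadd [OF S x a] vadd_commute [of a1 x] by simp
  then have "vsub (S (vadd a1 x)) (S a1) = S x"
    using lin_symp_vecs [OF S] x a by simp
  then show "p \<in> graph n (\<lambda>v. vsub (S v) (S a1)) O R O graph m (\<lambda>w. vadd (T w) a2)"
    using p x w a by (auto simp: graph_relcomp_iff padd_def vadd_commute)
next
  fix p assume "p \<in> graph n (\<lambda>v. vsub (S v) (S a1)) O R O graph m (\<lambda>w. vadd (T w) a2)"
  then obtain x w where p: "p = (x, vadd (T w) a2)" and x: "length x = n"
    and w: "(vsub (S x) (S a1), w) \<in> R" "length w = m"
    by (cases p) (auto simp: graph_relcomp_iff)
  have "S (vsub x a1) = vsub (S x) (S a1)" by (rule lin_symp_vsub [OF S x a])
  then have "(vsub x a1, T w) \<in> graph n S O R O graph m T"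
    using x w a by (auto simp: graph_relcomp_iff)
  moreover have "p = padd (a1, a2) (vsub x a1, T w)"
    using p x a vadd_commute [of a1 "vsub x a1"] vadd_commute [of a2 "T w"] by (simp add: padd_def)
  ultimately show "p \<in> padd (a1, a2) ` (graph n S O R O graph m T)" by blast
qed

lemma affine_symp_translate:
  fixes S :: "('a::field) svec \<Rightarrow> 'a svec"
  assumes S: "lin_symp n S" and b: "length b = n"
  shows "affine_symp n (\<lambda>v. vadd (S v) b)"
proof -
  obtain S' where S': "lin_symp n S'" "\<And>v. length v = n \<Longrightarrow> S' (S v) = v"
    "\<And>v. length v = n \<Longrightarrow> S (S' v) = v"
    using lin_symp_inverse [OF S] by blast
  note len = lin_symp_vecs [OF S] lin_symp_vecs [OF S'(1)]
  have "bij_betw (\<lambda>v. vadd (S v) b) (vecs n) (vecs n)"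
  proof (rule bij_betw_byWitness [where f' = "\<lambda>v. S' (vsub v b)"])
    show "\<forall>v\<in>vecs n. S' (vsub (vadd (S v) b) b) = v" using len b S'(2) by simp
    show "\<forall>v\<in>vecs n. vadd (S (S' (vsub v b))) b = v" using len b S'(3) by simp
  qed (use len b in auto)
  then show ?thesis
    using S b unfolding affine_symp_def lin_symp_def by auto
qed

lemma lin_lagrangian_rel_graph_normal_form:
  fixes L :: "(('a::field) svec \<times> 'a svec) set"
  assumes L: "lin_lagrangian_rel n m L"
  obtains k S T where "k \<le> min n m" "lin_symp n S" "lin_symp m T"
    "L = graph n S O normal_rel n m k O graph m T"
proof -
  obtain k S T0 where k: "k \<le> min n m" and S: "lin_symp n S" and T0: "lin_symp m T0"
    and eq: "map_prod S T0 ` L = normal_rel n m k"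
    using lin_lagrangian_rel_has_normal_form [OF L] by (auto simp: has_normal_form_def)
  obtain T where "lin_symp m T" "L = graph n S O map_prod S T0 ` L O graph m T"
    using graph_relcomp_of_image [OF lagrangian_subset [OF L] S T0] by blast
  then show ?thesis using that k S eq by simp
qed

lemma affine_lagrangian_rel_graph_normal_form:
  fixes L :: "(('a::field) svec \<times> 'a svec) set"
  assumes L: "affine_lagrangian_rel n m L" "L \<noteq> {}"
  obtains k S T where "k \<le> min n m" "affine_symp n S" "affine_symp m T"
    "L = graph n S O normal_rel n m k O graph m T"
proof -
  obtain a1 a2 D where a: "length a1 = n" "length a2 = m" and D: "lin_lagrangian_rel n m D"
    and LD: "L = padd (a1, a2) ` D"
    using L unfolding affine_lagrangian_rel_def by auto
  obtain k S T where k: "k \<le> min n m" and S: "lin_symp n S" and T: "lin_symp m T"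
    and DST: "D = graph n S O normal_rel n m k O graph m T"
    using lin_lagrangian_rel_graph_normal_form [OF D] by blast
  have "L = graph n (\<lambda>v. vsub (S v) (S a1)) O normal_rel n m k O graph m (\<lambda>w. vadd (T w) a2)"
    unfolding LD DST by (rule image_padd_graph_relcomp [OF S a(1)])
  moreover have "affine_symp n (\<lambda>v. vsub (S v) (S a1))"
    unfolding vsub_def using affine_symp_translate [OF S] lin_symp_vecs [OF S a(1)] by simp
  moreover have "affine_symp m (\<lambda>w. vadd (T w) a2)"
    using affine_symp_translate [OF T a(2)] .
  ultimately show ?thesis using that k by blast
qed

theorem mainTheorem1:
  fixes L :: "(('a::field) svec \<times> 'a svec) set" and n m :: nat
  assumes "affine_lagrangian_rel n m L" and "L \<noteq> {}"
  shows "(\<exists>k S T. k \<le> min n m \<and> affine_symp n S \<and> affine_symp m T \<and>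
            L = graph n S O rsum (idrel k) (dagger (Prel (n - k)))
                  O rsum (idrel k) (Prel (m - k)) O graph m T)
       \<and> (lin_lagrangian_rel n m L \<longrightarrow>
          (\<exists>k S T. k \<le> min n m \<and> lin_symp n S \<and> lin_symp m T \<and>
            L = graph n S O rsum (idrel k) (dagger (Prel (n - k)))
                  O rsum (idrel k) (Prel (m - k)) O graph m T))"
proof -
  have relcomp: "graph n S O normal_rel n m k O graph m T =
      graph n S O rsum (idrel k) (dagger (Prel (n - k)))
        O rsum (idrel k) (Prel (m - k)) O graph m T"
    if "k \<le> min n m" for k and S T :: "'a svec \<Rightarrow> 'a svec"
    using that by (simp add: normal_rel_eq_relcomp [symmetric] O_assoc)
  show ?thesis
  proof (intro conjI impI)
    obtain k S T where "k \<le> min n m" "affine_symp n S" "affine_symp m T"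
      "L = graph n S O normal_rel n m k O graph m T"
      using affine_lagrangian_rel_graph_normal_form [OF assms] by blast
    then show "\<exists>k S T. k \<le> min n m \<and> affine_symp n S \<and> affine_symp m T \<and>
        L = graph n S O rsum (idrel k) (dagger (Prel (n - k)))
          O rsum (idrel k) (Prel (m - k)) O graph m T"
      using relcomp by blast
  next
    assume "lin_lagrangian_rel n m L"
    then obtain k S T where "k \<le> min n m" "lin_symp n S" "lin_symp m T"
      "L = graph n S O normal_rel n m k O graph m T"
      by (rule lin_lagrangian_rel_graph_normal_form)
    then show "\<exists>k S T. k \<le> min n m \<and> lin_symp n S \<and> lin_symp m T \<and>
        L = graph n S O rsum (idrel k) (dagger (Prel (n - k)))
          O rsum (idrel k) (Prel (m - k)) O graph m T"
      using relcomp by blast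
  qed
qed

end
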